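(* Let $G$ be a finite simple graph, let $I$ be a maximum critical independent set in $G$, and let $X=I\cup N(I)$. Then $$|\operatorname{nucleus}(G)|+|\operatorname{diadem}(G)|\le |\operatorname{nucleus}(G[X])|+|\operatorname{diadem}(G[X])|.$$
   Context: For a graph $H$ and $Y\subseteq V(H)$, $N_H(Y)$ is the set of vertices of $H$ adjacent to some vertex of $Y$, and $d_H(Y)=|Y|-|N_H(Y)|$. An independent set $S$ of $H$ is critical in $H$ if $d_H(S)=\max\{d_H(Y):Y\subseteq V(H)\}$; the empty set may be critical. A maximum critical independent set is a critical independent set of maximum cardinality. $\operatorname{nucleus}(H)$ and $\operatorname{diadem}(H)$ are, respectively, the intersection and the union of all maximum critical independent sets of $H$; both are empty if the only critical independent set is $\emptyset$. $N(I)=N_G(I)$, and $G[X]$ is the subgraph of $G$ induced by $X$. *)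

theory Defs
  imports Main
begin

text \<open>The induced subgraph G[X] (X a subset of V) is represented by the vertex set X
with the same adjacency relation; all notions below only look at edges
between vertices of the given vertex set.\<close>

definition simple_graph :: "'a set \<Rightarrow> ('a \<Rightarrow> 'a \<Rightarrow> bool) \<Rightarrow> bool" where
  "simple_graph V E \<longleftrightarrow> finite V \<and> (\<forall>x y. E x y \<longrightarrow> E y x)
     \<and> (\<forall>x. \<not> E x x) \<and> (\<forall>x y. E x y \<longrightarrow> x \<in> V \<and> y \<in> V)"

definition nbhd :: "'a set \<Rightarrow> ('a \<Rightarrow> 'a \<Rightarrow> bool) \<Rightarrow> 'a set \<Rightarrow> 'a set" where
  "nbhd V E Y = {v \<in> V. \<exists>y\<in>Y. E v y}"

definition dfc :: "'a set \<Rightarrow> ('a \<Rightarrow> 'a \<Rightarrow> bool) \<Rightarrow> 'a set \<Rightarrow> int" where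
  "dfc V E Y = int (card Y) - int (card (nbhd V E Y))"

definition indep :: "'a set \<Rightarrow> ('a \<Rightarrow> 'a \<Rightarrow> bool) \<Rightarrow> 'a set \<Rightarrow> bool" where
  "indep V E S \<longleftrightarrow> S \<subseteq> V \<and> (\<forall>x\<in>S. \<forall>y\<in>S. \<not> E x y)"

definition critical_indep :: "'a set \<Rightarrow> ('a \<Rightarrow> 'a \<Rightarrow> bool) \<Rightarrow> 'a set \<Rightarrow> bool" where
  "critical_indep V E S \<longleftrightarrow> indep V E S \<and>
     dfc V E S = Max {dfc V E Y | Y. Y \<subseteq> V}"

definition max_critical_indep :: "'a set \<Rightarrow> ('a \<Rightarrow> 'a \<Rightarrow> bool) \<Rightarrow> 'a set \<Rightarrow> bool" where
  "max_critical_indep V E S \<longleftrightarrow> critical_indep V E S \<and>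
     (\<forall>T. critical_indep V E T \<longrightarrow> card T \<le> card S)"

definition nucleus :: "'a set \<Rightarrow> ('a \<Rightarrow> 'a \<Rightarrow> bool) \<Rightarrow> 'a set" where
  "nucleus V E = (if {S. max_critical_indep V E S} = {} then {}
                  else \<Inter> {S. max_critical_indep V E S})"

definition diadem :: "'a set \<Rightarrow> ('a \<Rightarrow> 'a \<Rightarrow> bool) \<Rightarrow> 'a set" where
  "diadem V E = \<Union> {S. max_critical_indep V E S}"

end

theory Submission
  imports Defs
begin

text \<open>Every critical independent set of \<open>G\<close> lies in \<open>X = I \<union> N(I)\<close>, and criticality of \<open>I\<close>
  gives Hall's condition from \<open>N(I)\<close> into \<open>I\<close>. Hence \<open>G[X]\<close> has the same critical difference,
  \<open>I\<close> stays a maximum critical independent set of \<open>G[X]\<close>, and so does every maximum critical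
  independent set of \<open>G\<close>: passing to \<open>G[X]\<close>, the nucleus can only shrink and the diadem only
  grow. A maximum critical independent set \<open>S\<close> of \<open>G[X]\<close> has \<open>|N\<^sub>I(S - I)| = |S - I|\<close> and
  \<open>I - S \<subseteq> N\<^sub>I(S - I)\<close>, so \<open>B = diadem(G[X]) - I\<close> satisfies Hall's condition with equality and
  contains in its neighbourhood the set \<open>W\<close> of vertices lost from the nucleus. Hall's condition for
  \<open>B - N(W)\<close> then gives at least \<open>|W|\<close> vertices of \<open>B\<close> adjacent to \<open>W\<close>, and these are new in the
  diadem, because no vertex of a diadem is adjacent to the nucleus.\<close>

definition max_dfc :: "'a set \<Rightarrow> ('a \<Rightarrow> 'a \<Rightarrow> bool) \<Rightarrow> int" where
  "max_dfc V E = Max {dfc V E Y | Y. Y \<subseteq> V}"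

lemma critical_indep_iff:
  "critical_indep V E S \<longleftrightarrow> indep V E S \<and> dfc V E S = max_dfc V E"
  unfolding critical_indep_def max_dfc_def ..

lemma nbhd_Un: "nbhd V E (A \<union> B) = nbhd V E A \<union> nbhd V E B"
  unfolding nbhd_def by blast

lemma nbhd_mono: "A \<subseteq> B \<Longrightarrow> nbhd V E A \<subseteq> nbhd V E B"
  unfolding nbhd_def by blast

lemma nbhd_subset: "nbhd V E A \<subseteq> V"
  unfolding nbhd_def by blast

lemma nucleus_eq_Inter:
  "max_critical_indep V E I \<Longrightarrow> nucleus V E = \<Inter> {S. max_critical_indep V E S}"
  unfolding nucleus_def by auto

lemma diadem_Int_nbhd_nucleus: "diadem V E \<inter> nbhd V E (nucleus V E) = {}"
  unfolding diadem_def nucleus_def nbhd_def max_critical_indep_def critical_indep_def indep_def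
  by auto

locale finite_simple_graph =
  fixes V :: "'a set" and E :: "'a \<Rightarrow> 'a \<Rightarrow> bool"
  assumes simple_graph: "simple_graph V E"
begin

lemma finite_vertices: "finite V"
  using simple_graph unfolding simple_graph_def by blast

lemma edge_sym: "E x y \<Longrightarrow> E y x"
  using simple_graph unfolding simple_graph_def by blast

lemma edge_vertices: "E x y \<Longrightarrow> x \<in> V"
  using simple_graph unfolding simple_graph_def by blast

lemma finite_subset_vertices: "A \<subseteq> V \<Longrightarrow> finite A"
  using finite_vertices finite_subset by blast

lemma finite_nbhd: "finite (nbhd W E A)"
  by (rule finite_subset_vertices) (auto simp: nbhd_def dest: edge_vertices)

lemma dfc_le_max_dfc:
  assumes "Y \<subseteq> V"
  shows "dfc V E Y \<le> max_dfc V E"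
proof -
  have "{dfc V E Y | Y. Y \<subseteq> V} = dfc V E ` Pow V"
    by auto
  then have "finite {dfc V E Y | Y. Y \<subseteq> V}"
    using finite_vertices by simp
  then show ?thesis
    unfolding max_dfc_def using assms by (auto intro: Max_ge)
qed

lemma dfc_supermodular:
  assumes "Y \<subseteq> V" "Z \<subseteq> V"
  shows "dfc V E Y + dfc V E Z \<le> dfc V E (Y \<union> Z) + dfc V E (Y \<inter> Z)"
proof -
  have "card Y + card Z = card (Y \<union> Z) + card (Y \<inter> Z)"
    using assms by (intro card_Un_Int) (auto intro: finite_subset_vertices)
  moreover have "card (nbhd V E Y) + card (nbhd V E Z)
      = card (nbhd V E (Y \<union> Z)) + card (nbhd V E Y \<inter> nbhd V E Z)"
    unfolding nbhd_Un by (intro card_Un_Int finite_nbhd)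
  moreover have "nbhd V E (Y \<inter> Z) \<subseteq> nbhd V E Y \<inter> nbhd V E Z"
    unfolding nbhd_def by blast
  then have "card (nbhd V E (Y \<inter> Z)) \<le> card (nbhd V E Y \<inter> nbhd V E Z)"
    by (intro card_mono) (simp_all add: finite_nbhd)
  ultimately show ?thesis unfolding dfc_def by linarith
qed

lemma dfc_Un_eq_max_dfc:
  assumes "Y \<subseteq> V" "Z \<subseteq> V" "dfc V E Y = max_dfc V E" "dfc V E Z = max_dfc V E"
  shows "dfc V E (Y \<union> Z) = max_dfc V E"
proof -
  have "dfc V E (Y \<union> Z) \<le> max_dfc V E" "dfc V E (Y \<inter> Z) \<le> max_dfc V E"
    using assms(1,2) by (auto intro: dfc_le_max_dfc)
  then show ?thesis using dfc_supermodular[OF assms(1,2)] assms(3,4) by linarith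
qed

text \<open>Removing from \<open>I\<close> the neighbours of \<open>A \<subseteq> N(I)\<close> removes all of \<open>A\<close> from
  the neighbourhood, so criticality of \<open>I\<close> forces \<open>|N\<^sub>I(A)| \<ge> |A|\<close>.\<close>
lemma card_le_card_nbhd_if_critical:
  assumes I: "I \<subseteq> V" "dfc V E I = max_dfc V E" and A: "A \<subseteq> nbhd V E I"
  shows "card A \<le> card (nbhd I E A)"
proof -
  define I' where "I' = I - nbhd I E A"
  have "nbhd V E I' \<subseteq> nbhd V E I - A"
    unfolding I'_def nbhd_def by (auto dest: edge_sym)
  then have "card (nbhd V E I') \<le> card (nbhd V E I - A)"
    by (intro card_mono) (auto simp: finite_nbhd)
  moreover have "card (nbhd V E I) = card A + card (nbhd V E I - A)"
    using card_Int_Diff[of "nbhd V E I" A] finite_nbhd A by (simp add: Int_absorb1)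
  moreover have "card I = card (nbhd I E A) + card I'"
    using card_Int_Diff[of I "nbhd I E A"] finite_subset_vertices[OF I(1)]
    unfolding I'_def by (simp add: Int_absorb1[OF nbhd_subset])
  moreover have "dfc V E I' \<le> dfc V E I"
    using I dfc_le_max_dfc[of I'] unfolding I'_def by auto
  ultimately show ?thesis unfolding dfc_def by linarith
qed

lemma indep_Un_Diff_nbhd:
  assumes "indep V E I" "indep V E S"
  shows "indep V E (I \<union> (S - nbhd V E I))"
  using assms unfolding indep_def nbhd_def by (auto dest: edge_sym)

lemma nbhd_Un_Diff_nbhd_subset:
  assumes "indep V E I"
  shows "nbhd V E (I \<union> (S - nbhd V E I)) \<subseteq> nbhd V E (S \<union> I) - nbhd I E (S \<inter> nbhd V E I)"
proof
  fix v assume "v \<in> nbhd V E (I \<union> (S - nbhd V E I))"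
  then obtain z where z: "z \<in> I \<union> (S - nbhd V E I)" "E v z" and v: "v \<in> V"
    unfolding nbhd_def by blast
  have "v \<notin> I \<or> z \<notin> I"
    using z(2) assms unfolding indep_def by blast
  moreover have "v \<notin> I \<or> z \<notin> S - nbhd V E I"
    using z(2) edge_sym edge_vertices unfolding nbhd_def by blast
  ultimately have "v \<notin> I"
    using z(1) by blast
  moreover have "v \<in> nbhd V E (S \<union> I)"
    using z v unfolding nbhd_def by blast
  ultimately show "v \<in> nbhd V E (S \<union> I) - nbhd I E (S \<inter> nbhd V E I)"
    unfolding nbhd_def by blast
qed

text \<open>Dropping \<open>S \<inter> N(I)\<close> from the critical set \<open>S \<union> I\<close> removes at least its neighbours
  in \<open>I\<close> from the neighbourhood, and by Hall's condition there are at least as many of those.\<close>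
lemma critical_indep_Un_Diff_nbhd:
  assumes I: "critical_indep V E I" and S: "critical_indep V E S"
  shows "critical_indep V E (I \<union> (S - nbhd V E I))"
proof -
  have IV: "I \<subseteq> V" and indep_I: "indep V E I" and dfc_I: "dfc V E I = max_dfc V E"
    using I unfolding critical_indep_iff indep_def by auto
  have SV: "S \<subseteq> V" and indep_S: "indep V E S" and dfc_S: "dfc V E S = max_dfc V E"
    using S unfolding critical_indep_iff indep_def by auto
  define U where "U = S \<union> I"
  define A where "A = S \<inter> nbhd V E I"
  define Z where "Z = I \<union> (S - nbhd V E I)"
  have UV: "U \<subseteq> V" and AU: "A \<subseteq> U"
    unfolding U_def A_def using SV IV by auto
  have Z_eq: "Z = U - A"
    using indep_I unfolding Z_def U_def A_def indep_def nbhd_def by blast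
  have nbhd_A: "nbhd I E A \<subseteq> nbhd V E U"
    unfolding nbhd_def A_def U_def using IV by blast
  have "card U = card A + card Z"
    using card_Int_Diff[of U A] finite_subset_vertices[OF UV] AU Z_eq by (simp add: Int_absorb1)
  moreover have "card (nbhd V E U) = card (nbhd I E A) + card (nbhd V E U - nbhd I E A)"
    using card_Int_Diff[of "nbhd V E U" "nbhd I E A"] finite_nbhd nbhd_A by (simp add: Int_absorb1)
  moreover have "card (nbhd V E Z) \<le> card (nbhd V E U - nbhd I E A)"
    using nbhd_Un_Diff_nbhd_subset[OF indep_I, of S] unfolding Z_def U_def A_def
    by (intro card_mono) (simp_all add: finite_nbhd)
  moreover have "card A \<le> card (nbhd I E A)"
    unfolding A_def using IV dfc_I by (rule card_le_card_nbhd_if_critical) blast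
  moreover have "dfc V E U = max_dfc V E"
    unfolding U_def using SV IV dfc_S dfc_I by (rule dfc_Un_eq_max_dfc)
  moreover have "dfc V E Z \<le> max_dfc V E"
    using Z_eq UV by (intro dfc_le_max_dfc) blast
  ultimately show ?thesis
    using indep_Un_Diff_nbhd[OF indep_I indep_S] unfolding critical_indep_iff Z_def dfc_def
    by linarith
qed

end

locale max_critical_indep_graph = finite_simple_graph +
  fixes I :: "'a set"
  assumes max_critical_indep_I: "max_critical_indep V E I"
begin

abbreviation X :: "'a set" where "X \<equiv> I \<union> nbhd V E I"

lemma critical_indep_I: "critical_indep V E I"
  using max_critical_indep_I unfolding max_critical_indep_def by blast

lemma I_subset: "I \<subseteq> V" and indep_I: "indep V E I" and dfc_I: "dfc V E I = max_dfc V E"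
  using critical_indep_I unfolding critical_indep_iff indep_def by auto

lemma card_le_card_I: "critical_indep V E T \<Longrightarrow> card T \<le> card I"
  using max_critical_indep_I unfolding max_critical_indep_def by blast

lemma finite_I: "finite I"
  using I_subset by (rule finite_subset_vertices)

lemma card_le_card_nbhd_I: "A \<subseteq> nbhd V E I \<Longrightarrow> card A \<le> card (nbhd I E A)"
  using I_subset dfc_I by (rule card_le_card_nbhd_if_critical)

lemma I_Int_nbhd_I: "I \<inter> nbhd V E I = {}"
  using indep_I unfolding indep_def nbhd_def by blast

lemma X_subset: "X \<subseteq> V"
  using I_subset nbhd_subset[of V E I] by (rule Un_least)

lemma critical_indep_subset_X:
  assumes "critical_indep V E S"
  shows "S \<subseteq> X"
proof -
  have "critical_indep V E (I \<union> (S - nbhd V E I))"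
    using critical_indep_I assms by (rule critical_indep_Un_Diff_nbhd)
  moreover have "finite (I \<union> (S - nbhd V E I))"
    using assms finite_I unfolding critical_indep_iff indep_def
    by (auto intro: finite_subset_vertices)
  ultimately have "I \<union> (S - nbhd V E I) = I"
    using card_le_card_I by (metis card_seteq sup_ge1)
  then show ?thesis
    by blast
qed

lemma dfc_induced_le:
  assumes Y: "Y \<subseteq> X"
  shows "dfc X E Y \<le> max_dfc V E"
proof -
  have "nbhd V E (Y \<inter> I) \<union> nbhd I E (Y - I) \<subseteq> nbhd X E Y"
    using nbhd_mono[of "Y \<inter> I" I V E] unfolding nbhd_def by blast
  then have "card (nbhd V E (Y \<inter> I) \<union> nbhd I E (Y - I)) \<le> card (nbhd X E Y)"
    by (intro card_mono finite_nbhd)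
  moreover have "nbhd V E (Y \<inter> I) \<inter> nbhd I E (Y - I) = {}"
    using nbhd_mono[of "Y \<inter> I" I V E] I_Int_nbhd_I unfolding nbhd_def by blast
  then have "card (nbhd V E (Y \<inter> I) \<union> nbhd I E (Y - I))
      = card (nbhd V E (Y \<inter> I)) + card (nbhd I E (Y - I))"
    by (simp add: card_Un_disjoint finite_nbhd)
  moreover have "card (Y - I) \<le> card (nbhd I E (Y - I))"
    using Y by (intro card_le_card_nbhd_I) blast
  moreover have "card Y = card (Y \<inter> I) + card (Y - I)"
    using Y X_subset by (intro card_Int_Diff finite_subset_vertices) blast
  moreover have "dfc V E (Y \<inter> I) \<le> max_dfc V E"
    using I_subset by (intro dfc_le_max_dfc) blast
  ultimately show ?thesis
    unfolding dfc_def by linarith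
qed

lemma nbhd_induced_I: "nbhd X E I = nbhd V E I"
  unfolding nbhd_def using I_subset by blast

lemma max_dfc_induced: "max_dfc X E = max_dfc V E"
  unfolding max_dfc_def
proof (rule Max_eqI)
  have "{dfc X E Y | Y. Y \<subseteq> X} = dfc X E ` Pow X" by auto
  then show "finite {dfc X E Y | Y. Y \<subseteq> X}"
    using finite_subset_vertices[OF X_subset] by simp
  show "d \<le> Max {dfc V E Y | Y. Y \<subseteq> V}" if "d \<in> {dfc X E Y | Y. Y \<subseteq> X}" for d
    using that dfc_induced_le unfolding max_dfc_def by blast
  have "dfc X E I = Max {dfc V E Y | Y. Y \<subseteq> V}"
    using dfc_I unfolding dfc_def nbhd_induced_I max_dfc_def .
  then show "Max {dfc V E Y | Y. Y \<subseteq> V} \<in> {dfc X E Y | Y. Y \<subseteq> X}"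
    using Un_upper1[of I "nbhd V E I"] by (metis (mono_tags, lifting) mem_Collect_eq)
qed

text \<open>\<open>I\<close> splits into \<open>S \<inter> I\<close>, the neighbours \<open>N\<^sub>I(S - I)\<close> of the rest of \<open>S\<close> and
  a remainder; by Hall's condition the middle part has at least \<open>|S - I|\<close> elements.\<close>
lemma card_indep_induced:
  assumes "indep X E S"
  shows "card S + (card (nbhd I E (S - I)) - card (S - I)) + card (I - S - nbhd I E (S - I))
    = card I"
proof -
  have SX: "S \<subseteq> X" and disj: "(S \<inter> I) \<inter> nbhd I E (S - I) = {}"
    using assms unfolding indep_def nbhd_def by auto
  have "I \<inter> (S \<union> nbhd I E (S - I)) = (S \<inter> I) \<union> nbhd I E (S - I)"
    "I - (S \<union> nbhd I E (S - I)) = I - S - nbhd I E (S - I)"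
    unfolding nbhd_def by blast+
  then have "card I = card ((S \<inter> I) \<union> nbhd I E (S - I)) + card (I - S - nbhd I E (S - I))"
    using card_Int_Diff[OF finite_I, of "S \<union> nbhd I E (S - I)"] by simp
  also have "card ((S \<inter> I) \<union> nbhd I E (S - I)) = card (S \<inter> I) + card (nbhd I E (S - I))"
    using disj finite_I by (simp add: card_Un_disjoint finite_nbhd)
  finally have "card I = card (S \<inter> I) + card (nbhd I E (S - I)) + card (I - S - nbhd I E (S - I))" .
  moreover have "card S = card (S \<inter> I) + card (S - I)"
    using SX X_subset by (intro card_Int_Diff finite_subset_vertices) blast
  moreover have "card (S - I) \<le> card (nbhd I E (S - I))"
    using SX by (intro card_le_card_nbhd_I) blast
  ultimately show ?thesis
    by linarith
qed

corollary card_indep_induced_le: "indep X E S \<Longrightarrow> card S \<le> card I"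
  using card_indep_induced[of S] by linarith

lemma max_critical_indep_induced_I: "max_critical_indep X E I"
proof -
  have "indep X E I"
    using indep_I unfolding indep_def by blast
  moreover have "dfc X E I = max_dfc V E"
    using dfc_I unfolding dfc_def nbhd_induced_I .
  ultimately show ?thesis
    unfolding max_critical_indep_def critical_indep_iff max_dfc_induced
    using card_indep_induced_le by blast
qed

lemma card_max_critical_indep_induced: "max_critical_indep X E S \<Longrightarrow> card S = card I"
  using max_critical_indep_induced_I card_indep_induced_le
  unfolding max_critical_indep_def critical_indep_def by (meson le_antisym)

lemma max_critical_indep_induced:
  assumes S: "max_critical_indep V E S"
  shows "max_critical_indep X E S"
proof -
  have crit: "critical_indep V E S"
    using S unfolding max_critical_indep_def by blast
  then have SX: "S \<subseteq> X" and indep_S: "indep X E S" and dfc_S: "dfc V E S = max_dfc V E"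
    using critical_indep_subset_X unfolding critical_indep_iff indep_def by auto
  have "card (nbhd X E S) \<le> card (nbhd V E S)"
    using X_subset by (intro card_mono finite_nbhd) (auto simp: nbhd_def)
  then have "dfc X E S = max_dfc V E"
    using dfc_S dfc_induced_le[OF SX] unfolding dfc_def by linarith
  moreover have "card S = card I"
    using S card_le_card_I[OF crit] critical_indep_I unfolding max_critical_indep_def
    by (meson le_antisym)
  ultimately show ?thesis
    using indep_S card_indep_induced_le
    unfolding max_critical_indep_def critical_indep_iff max_dfc_induced by auto
qed

definition tight :: "'a set \<Rightarrow> bool" where
  "tight A \<longleftrightarrow> A \<subseteq> nbhd V E I \<and> card (nbhd I E A) = card A"

lemma max_critical_indep_induced_tight:
  assumes "max_critical_indep X E S"
  shows "tight (S - I)" and "I - S \<subseteq> nbhd I E (S - I)"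
proof -
  have indep_S: "indep X E S"
    using assms unfolding max_critical_indep_def critical_indep_def by blast
  then have "card (nbhd I E (S - I)) \<le> card (S - I)" "card (I - S - nbhd I E (S - I)) = 0"
    using card_indep_induced[OF indep_S] card_max_critical_indep_induced[OF assms] by linarith+
  moreover have "S - I \<subseteq> nbhd V E I"
    using indep_S unfolding indep_def by blast
  ultimately show "tight (S - I)" "I - S \<subseteq> nbhd I E (S - I)"
    unfolding tight_def using card_le_card_nbhd_I finite_I by (auto simp: le_antisym)
qed

lemma tight_Un:
  assumes "tight A" "tight B"
  shows "tight (A \<union> B)"
proof -
  have A: "A \<subseteq> nbhd V E I" "card (nbhd I E A) = card A"
    and B: "B \<subseteq> nbhd V E I" "card (nbhd I E B) = card B"
    using assms unfolding tight_def by auto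
  have "card A + card B = card (A \<union> B) + card (A \<inter> B)"
    using A(1) B(1) by (intro card_Un_Int) (auto intro: finite_subset[OF _ finite_nbhd])
  moreover have "card (nbhd I E A) + card (nbhd I E B)
      = card (nbhd I E (A \<union> B)) + card (nbhd I E A \<inter> nbhd I E B)"
    unfolding nbhd_Un by (intro card_Un_Int finite_nbhd)
  moreover have "nbhd I E (A \<inter> B) \<subseteq> nbhd I E A \<inter> nbhd I E B"
    unfolding nbhd_def by blast
  then have "card (nbhd I E (A \<inter> B)) \<le> card (nbhd I E A \<inter> nbhd I E B)"
    by (intro card_mono) (simp_all add: finite_nbhd)
  moreover have "card (A \<union> B) \<le> card (nbhd I E (A \<union> B))"
    "card (A \<inter> B) \<le> card (nbhd I E (A \<inter> B))"
    using A(1) B(1) by (auto intro: card_le_card_nbhd_I)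
  ultimately show ?thesis
    unfolding tight_def using A(1) B(1) by (simp add: A(2) B(2))
qed

lemma tight_Union: "finite F \<Longrightarrow> (\<And>A. A \<in> F \<Longrightarrow> tight A) \<Longrightarrow> tight (\<Union> F)"
proof (induction F rule: finite_induct)
  case empty
  then show ?case
    unfolding tight_def nbhd_def by simp
next
  case (insert A F)
  then show ?case
    by (simp add: tight_Un)
qed

text \<open>Hall's condition for \<open>B - N(W)\<close>, whose neighbours in \<open>I\<close> avoid \<open>W\<close>, leaves at
  most \<open>|B| - |W|\<close> vertices of \<open>B\<close> outside \<open>N(W)\<close>.\<close>
lemma card_le_card_Int_nbhd_if_tight:
  assumes B: "tight B" and W: "W \<subseteq> nbhd I E B"
  shows "card W \<le> card (B \<inter> nbhd V E W)"
proof -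
  have B_sub: "B \<subseteq> nbhd V E I" and card_B: "card (nbhd I E B) = card B"
    using B unfolding tight_def by auto
  have "nbhd I E (B - nbhd V E W) \<subseteq> nbhd I E B - W"
    unfolding nbhd_def by (auto dest: edge_sym edge_vertices)
  then have "card (nbhd I E (B - nbhd V E W)) \<le> card (nbhd I E B - W)"
    by (intro card_mono) (simp_all add: finite_nbhd)
  moreover have "card (nbhd I E B) = card W + card (nbhd I E B - W)"
    using card_Int_Diff[of "nbhd I E B" W] finite_nbhd W by (simp add: Int_absorb1)
  moreover have "card B = card (B \<inter> nbhd V E W) + card (B - nbhd V E W)"
    using B_sub by (intro card_Int_Diff finite_subset[OF _ finite_nbhd])
  moreover have "card (B - nbhd V E W) \<le> card (nbhd I E (B - nbhd V E W))"
    using B_sub by (intro card_le_card_nbhd_I) blast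
  ultimately show ?thesis
    using card_B by linarith
qed

lemma nucleus_subset_I: "nucleus V E \<subseteq> I"
  using max_critical_indep_I by (auto simp: nucleus_eq_Inter)

lemma nucleus_induced_subset: "nucleus X E \<subseteq> nucleus V E"
  unfolding nucleus_eq_Inter[OF max_critical_indep_I] nucleus_eq_Inter[OF max_critical_indep_induced_I]
  using max_critical_indep_induced by (intro Inter_anti_mono) blast

lemma diadem_subset_induced: "diadem V E \<subseteq> diadem X E"
  unfolding diadem_def using max_critical_indep_induced by blast

lemma diadem_induced_subset: "diadem X E \<subseteq> X"
  unfolding diadem_def max_critical_indep_def critical_indep_def indep_def by blast

lemma tight_diadem_induced_Diff: "tight (diadem X E - I)"
proof -
  have "{S. max_critical_indep X E S} \<subseteq> Pow X"
    unfolding max_critical_indep_def critical_indep_def indep_def by blast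
  then have "finite {S. max_critical_indep X E S}"
    using X_subset by (meson finite_Pow_iff finite_subset finite_subset_vertices)
  then have "tight (\<Union> S \<in> {S. max_critical_indep X E S}. S - I)"
    by (intro tight_Union) (auto intro: max_critical_indep_induced_tight(1))
  moreover have "(\<Union> S \<in> {S. max_critical_indep X E S}. S - I) = diadem X E - I"
    unfolding diadem_def by blast
  ultimately show ?thesis
    by simp
qed

lemma nucleus_Diff_subset_nbhd: "nucleus V E - nucleus X E \<subseteq> nbhd I E (diadem X E - I)"
proof
  fix w assume "w \<in> nucleus V E - nucleus X E"
  then obtain S where S: "max_critical_indep X E S" "w \<notin> S" and "w \<in> I"
    using max_critical_indep_I max_critical_indep_induced_I by (auto simp: nucleus_eq_Inter)
  then have "w \<in> nbhd I E (S - I)"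
    using max_critical_indep_induced_tight(2) by blast
  moreover have "S - I \<subseteq> diadem X E - I"
    using S(1) unfolding diadem_def by blast
  ultimately show "w \<in> nbhd I E (diadem X E - I)"
    using nbhd_mono by blast
qed

lemma card_nucleus_diadem_le_induced:
  "card (nucleus V E) + card (diadem V E) \<le> card (nucleus X E) + card (diadem X E)"
proof -
  define W where "W = nucleus V E - nucleus X E"
  define B where "B = diadem X E - I"
  have card_W: "card W \<le> card (B \<inter> nbhd V E W)"
    unfolding W_def B_def using tight_diadem_induced_Diff nucleus_Diff_subset_nbhd
    by (rule card_le_card_Int_nbhd_if_tight)
  have "B \<inter> nbhd V E W \<subseteq> diadem X E - diadem V E"
    using diadem_Int_nbhd_nucleus[of V E] nbhd_mono[of W "nucleus V E" V E]
    unfolding B_def W_def by blast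
  moreover have "finite (diadem X E)"
    using diadem_induced_subset X_subset by (intro finite_subset_vertices) blast
  ultimately have "card (diadem V E \<union> (B \<inter> nbhd V E W)) \<le> card (diadem X E)"
    using diadem_subset_induced by (intro card_mono) auto
  moreover have "card (diadem V E \<union> (B \<inter> nbhd V E W)) = card (diadem V E) + card (B \<inter> nbhd V E W)"
    using \<open>B \<inter> nbhd V E W \<subseteq> diadem X E - diadem V E\<close> \<open>finite (diadem X E)\<close> diadem_subset_induced
    by (intro card_Un_disjoint) (auto intro: rev_finite_subset)
  moreover have "card (nucleus V E) = card (nucleus X E) + card W"
    using card_Int_Diff[of "nucleus V E" "nucleus X E"] finite_subset[OF nucleus_subset_I finite_I]
      Int_absorb1[OF nucleus_induced_subset]
    unfolding W_def by simp
  ultimately show ?thesis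
    using card_W by linarith
qed

end

theorem lemma2p4:
  fixes V :: "'a set" and E :: "'a \<Rightarrow> 'a \<Rightarrow> bool" and I :: "'a set"
  assumes "simple_graph V E"
    and "max_critical_indep V E I"
  shows "card (nucleus V E) + card (diadem V E)
         \<le> card (nucleus (I \<union> nbhd V E I) E) + card (diadem (I \<union> nbhd V E I) E)"
proof -
  interpret max_critical_indep_graph V E I
    using assms by unfold_locales
  show ?thesis
    by (rule card_nucleus_diadem_le_induced)
qed

end
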